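(* Let $\mathbf{\Pi}=\langle\mathit{PF},\Pi\rangle$ be a multi-valued probabilistic program such that $\mathrm{SM}''[\mathbf{\Pi}]$ is not empty and $M_{\mathbf{\Pi}}(c=v)>0$ for every probabilistic constant $c$ and every $v\in\mathrm{Dom}(c)$. Then for every interpretation $I$, $I\in\mathrm{SM}'[T(\mathbf{\Pi})]$ if and only if $I\in\mathrm{SM}''[\mathbf{\Pi}]$.
   Context: Stable model semantics: a rule is $A\leftarrow B\wedge N$ ($A$ a possibly empty disjunction of atoms, $B$ a conjunction of atoms, $N$ a formula with every atom occurrence under negation); the reduct $\Pi^I$ of a ground program keeps $A\leftarrow B$ for rules with $I\models N$; $I$ (a set of atoms) is a stable model if it is a minimal model of $\Pi^I$. An $\mathrm{LP}^{\mathrm{MLN}}$ program $\Pi$ is a finite set of weighted rules $w:R$, $w$ real (soft) or the symbol $\alpha$ (hard); $\Pi_I=\{w:R\in\Pi\mid I\models R\}$; $\overline{\cdot}$ drops weights. $\mathrm{SM}'[\Pi]$ is the set of $I$ that are stable models of $\overline{\Pi_I}$ and satisfy $\overline{\Pi^{\rm hard}}$ (the unweighted hard rules). Multi-valued signature: constants $c$ with finite domains $\mathrm{Dom}(c)$; atoms $c=v$, $v\in\mathrm{Dom}(c)$; constants are probabilistic or regular. A multi-valued probabilistic program $\mathbf{\Pi}=\langle\mathit{PF},\Pi\rangle$: $\mathit{PF}$ has, for each probabilistic constant $c$, one declaration $p_1:c=v_1\mid\dots\mid p_n:c=v_n$ ($\{v_i\}=\mathrm{Dom}(c)$ distinct,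 $p_i\in[0,1]$, $\sum p_i=1$), and $M_{\mathbf{\Pi}}(c=v_i)=p_i$; $\Pi$ is a set of rules whose heads contain no atom of a probabilistic constant. $T(\mathbf{\Pi})$ is the $\mathrm{LP}^{\mathrm{MLN}}$ program containing: $\ln(p_i):c=v_i$ if $0<p_i<1$, $\alpha:c=v_i$ if $p_i=1$, $\alpha:\bot\leftarrow c=v_i$ if $p_i=0$; $\alpha:R$ for $R\in\Pi$; $\alpha:\bot\leftarrow c=v_1\wedge c=v_2$ for every constant $c$ and distinct $v_1,v_2\in\mathrm{Dom}(c)$; $\alpha:\bot\leftarrow\neg\bigvee_{v\in\mathrm{Dom}(c)}c=v$ for every probabilistic $c$. $I$ is consistent if it satisfies the last two kinds of constraints; $\mathit{TC}(I)=\{c=v\in I\mid c$ probabilistic$\}$; $\mathrm{SM}''[\mathbf{\Pi}]$ is the set of consistent $I$ that are stable models of $\Pi\cup\mathit{TC}(I)$. *)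

theory Defs
  imports Complex_Main
begin

datatype 'a fml = FAtom 'a | FNeg "'a fml" | FAnd "'a fml list" | FOr "'a fml list"

abbreviation FTop :: "'a fml" where "FTop \<equiv> FAnd []"
abbreviation FBot :: "'a fml" where "FBot \<equiv> FOr []"

fun sat_fml :: "'a set \<Rightarrow> 'a fml \<Rightarrow> bool" where
  "sat_fml I (FAtom a) = (a \<in> I)"
| "sat_fml I (FNeg f) = (\<not> sat_fml I f)"
| "sat_fml I (FAnd fs) = (\<forall>f\<in>set fs. sat_fml I f)"
| "sat_fml I (FOr fs) = (\<exists>f\<in>set fs. sat_fml I f)"

fun atoms_fml :: "'a fml \<Rightarrow> 'a set" where
  "atoms_fml (FAtom a) = {a}"
| "atoms_fml (FNeg f) = atoms_fml f"
| "atoms_fml (FAnd fs) = (\<Union>f\<in>set fs. atoms_fml f)"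
| "atoms_fml (FOr fs) = (\<Union>f\<in>set fs. atoms_fml f)"

fun unneg_atoms :: "'a fml \<Rightarrow> 'a set" where
  "unneg_atoms (FAtom a) = {a}"
| "unneg_atoms (FNeg f) = {}"
| "unneg_atoms (FAnd fs) = (\<Union>f\<in>set fs. unneg_atoms f)"
| "unneg_atoms (FOr fs) = (\<Union>f\<in>set fs. unneg_atoms f)"

text \<open>A rule  A \<leftarrow> B \<and> N : head = atoms of the disjunction A, pbody = atoms of the
  conjunction B, nbody = N.\<close>
datatype 'a rule = Rule (head: "'a set") (pbody: "'a set") (nbody: "'a fml")

definition wf_rule :: "'a rule \<Rightarrow> bool" where
  "wf_rule R \<longleftrightarrow> finite (head R) \<and> finite (pbody R) \<and> unneg_atoms (nbody R) = {}"

definition rule_atoms :: "'a rule \<Rightarrow> 'a set" where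
  "rule_atoms R = head R \<union> pbody R \<union> atoms_fml (nbody R)"

definition sat_rule :: "'a set \<Rightarrow> 'a rule \<Rightarrow> bool" where
  "sat_rule I R \<longleftrightarrow> (pbody R \<subseteq> I \<and> sat_fml I (nbody R) \<longrightarrow> head R \<inter> I \<noteq> {})"

definition reduct :: "'a rule set \<Rightarrow> 'a set \<Rightarrow> ('a set \<times> 'a set) set" where
  "reduct P I = {(head R, pbody R) | R. R \<in> P \<and> sat_fml I (nbody R)}"

definition pos_model :: "('a set \<times> 'a set) set \<Rightarrow> 'a set \<Rightarrow> bool" where
  "pos_model Q J \<longleftrightarrow> (\<forall>(A, B)\<in>Q. B \<subseteq> J \<longrightarrow> A \<inter> J \<noteq> {})"

definition stable_model :: "'a rule set \<Rightarrow> 'a set \<Rightarrow> bool" where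
  "stable_model P I \<longleftrightarrow> pos_model (reduct P I) I \<and> (\<forall>J. J \<subset> I \<longrightarrow> \<not> pos_model (reduct P I) J)"

datatype weight = Soft real | Hard

type_synonym 'a lpmln = "('a rule \<times> weight) set"

definition SM' :: "'a lpmln \<Rightarrow> 'a set set" where
  "SM' P = {I. stable_model (fst ` {wr \<in> P. sat_rule I (fst wr)}) I
              \<and> (\<forall>wr\<in>P. snd wr = Hard \<longrightarrow> sat_rule I (fst wr))}"

text \<open>Signature: constants C (finite), probabilistic constants Cp \<subseteq> C, domains Dom;
  the atom c = v is the pair (c, v) with v \<in> Dom c.  The probability declarations PF
  are given by a function p, with M(c = v) = p c v.\<close>

definition sig_atoms :: "'c set \<Rightarrow> ('c \<Rightarrow> 'v set) \<Rightarrow> ('c \<times> 'v) set" where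
  "sig_atoms C Dom = {(c, v). c \<in> C \<and> v \<in> Dom c}"

definition mv_prob_program ::
  "'c set \<Rightarrow> 'c set \<Rightarrow> ('c \<Rightarrow> 'v set) \<Rightarrow> ('c \<Rightarrow> 'v \<Rightarrow> real) \<Rightarrow> ('c \<times> 'v) rule set \<Rightarrow> bool" where
  "mv_prob_program C Cp Dom p P \<longleftrightarrow>
     finite C \<and> Cp \<subseteq> C \<and> (\<forall>c\<in>C. finite (Dom c))
   \<and> (\<forall>c\<in>Cp. (\<forall>v\<in>Dom c. 0 \<le> p c v \<and> p c v \<le> 1) \<and> (\<Sum>v\<in>Dom c. p c v) = 1)
   \<and> finite P
   \<and> (\<forall>R\<in>P. wf_rule R \<and> rule_atoms R \<subseteq> sig_atoms C Dom
            \<and> (\<forall>(c, v)\<in>head R. c \<notin> Cp))"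

definition fact :: "'a \<Rightarrow> 'a rule" where
  "fact a = Rule {a} {} FTop"

definition some_enum :: "'v set \<Rightarrow> 'v list" where
  "some_enum S = (SOME xs. set xs = S \<and> distinct xs)"

definition T ::
  "'c set \<Rightarrow> 'c set \<Rightarrow> ('c \<Rightarrow> 'v set) \<Rightarrow> ('c \<Rightarrow> 'v \<Rightarrow> real) \<Rightarrow> ('c \<times> 'v) rule set
   \<Rightarrow> ('c \<times> 'v) lpmln" where
  "T C Cp Dom p P =
     {(fact (c, v), Soft (ln (p c v))) | c v. c \<in> Cp \<and> v \<in> Dom c \<and> 0 < p c v \<and> p c v < 1}
   \<union> {(fact (c, v), Hard) | c v. c \<in> Cp \<and> v \<in> Dom c \<and> p c v = 1}
   \<union> {(Rule {} {(c, v)} FTop, Hard) | c v. c \<in> Cp \<and> v \<in> Dom c \<and> p c v = 0}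
   \<union> {(R, Hard) | R. R \<in> P}
   \<union> {(Rule {} {(c, v1), (c, v2)} FTop, Hard) | c v1 v2. c \<in> C \<and> v1 \<in> Dom c \<and> v2 \<in> Dom c \<and> v1 \<noteq> v2}
   \<union> {(Rule {} {} (FNeg (FOr (map (\<lambda>v. FAtom (c, v)) (some_enum (Dom c))))), Hard) | c. c \<in> Cp}"

definition consistent :: "'c set \<Rightarrow> 'c set \<Rightarrow> ('c \<Rightarrow> 'v set) \<Rightarrow> ('c \<times> 'v) set \<Rightarrow> bool" where
  "consistent C Cp Dom I \<longleftrightarrow>
     (\<forall>c\<in>C. \<forall>v1\<in>Dom c. \<forall>v2\<in>Dom c. v1 \<noteq> v2 \<longrightarrow> \<not> ((c, v1) \<in> I \<and> (c, v2) \<in> I))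
   \<and> (\<forall>c\<in>Cp. \<exists>v\<in>Dom c. (c, v) \<in> I)"

definition TC :: "'c set \<Rightarrow> ('c \<times> 'v) set \<Rightarrow> ('c \<times> 'v) set" where
  "TC Cp I = {(c, v) \<in> I. c \<in> Cp}"

definition SM'' :: "'c set \<Rightarrow> 'c set \<Rightarrow> ('c \<Rightarrow> 'v set) \<Rightarrow> ('c \<times> 'v) rule set \<Rightarrow> ('c \<times> 'v) set set" where
  "SM'' C Cp Dom P = {I. consistent C Cp Dom I \<and> stable_model (P \<union> fact ` TC Cp I) I}"

end

(*
  Let Q be the set of rules of T(Pi) satisfied by I.  Under positive probabilities, I satisfies
  the hard rules of T(Pi) iff I is consistent and satisfies Pi: a value of probability 1 is then
  the only value of its constant, and no constraint of the form  <- c = v  occurs.  In that case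
  Q consists of Pi, the facts of TC(I) (each of which positivity puts into T(Pi)), and
  constraints (rules with empty head).
  A constraint satisfied by I holds in every subset of I as well, so it affects neither whether I
  models the reduct nor whether a proper subset of I does; hence I is a stable model of Q iff it
  is one of Pi together with the facts TC(I).
*)
theory Submission
  imports Defs
begin

lemma pos_model_reduct_iff:
  "pos_model (reduct Q I) J \<longleftrightarrow>
     (\<forall>R\<in>Q. sat_fml I (nbody R) \<longrightarrow> pbody R \<subseteq> J \<longrightarrow> head R \<inter> J \<noteq> {})"
  unfolding pos_model_def reduct_def by auto

lemma stable_model_sat_rule:
  assumes "stable_model Q I" and "R \<in> Q"
  shows "sat_rule I R"
  using assms unfolding stable_model_def pos_model_reduct_iff sat_rule_def by blast

lemma stable_model_drop_constraints:
  assumes "\<forall>R\<in>Q. sat_rule I R" and "Q' \<subseteq> Q" and "\<forall>R\<in>Q - Q'. head R = {}"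
  shows "stable_model Q I \<longleftrightarrow> stable_model Q' I"
proof -
  have "pos_model (reduct Q I) J \<longleftrightarrow> pos_model (reduct Q' I) J" if "J \<subseteq> I" for J
    using assms that unfolding pos_model_reduct_iff sat_rule_def by blast
  then show ?thesis
    unfolding stable_model_def by (blast dest: psubset_imp_subset)
qed

definition satisfied_rules :: "'a lpmln \<Rightarrow> 'a set \<Rightarrow> 'a rule set" where
  "satisfied_rules Q I = fst ` {wr \<in> Q. sat_rule I (fst wr)}"

lemma mem_satisfied_rules_iff:
  "R \<in> satisfied_rules Q I \<longleftrightarrow> (\<exists>w. (R, w) \<in> Q) \<and> sat_rule I R"
  unfolding satisfied_rules_def by force

lemma mem_SM'_iff:
  "I \<in> SM' Q \<longleftrightarrow>
     stable_model (satisfied_rules Q I) I \<and> (\<forall>R. (R, Hard) \<in> Q \<longrightarrow> sat_rule I R)"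
  unfolding SM'_def satisfied_rules_def by force

lemma sat_rule_fact [simp]: "sat_rule I (fact a) \<longleftrightarrow> a \<in> I"
  unfolding sat_rule_def fact_def by auto

lemma set_some_enum: "finite S \<Longrightarrow> set (some_enum S) = S"
  unfolding some_enum_def by (metis (mono_tags, lifting) finite_distinct_list someI_ex)

lemma set_some_enum_Dom:
  "mv_prob_program C Cp Dom p P \<Longrightarrow> c \<in> Cp \<Longrightarrow> set (some_enum (Dom c)) = Dom c"
  unfolding mv_prob_program_def by (metis set_some_enum subsetD)

lemma sum_pos_eq_term_imp_singleton:
  fixes f :: "'a \<Rightarrow> 'b::ordered_cancel_comm_monoid_add"
  assumes "finite D" and "\<forall>w\<in>D. 0 < f w" and "v \<in> D" and "sum f D = f v"
  shows "D = {v}"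
proof (rule ccontr)
  assume "D \<noteq> {v}"
  then obtain w where "w \<in> D - {v}" using assms(3) by blast
  then have "0 < sum f (D - {v})"
    using assms(1,2) by (intro sum_pos2[of _ w]) auto
  moreover have "sum f D = f v + sum f (D - {v})"
    using assms(1,3) by (simp add: sum.remove)
  ultimately have "f v + sum f (D - {v}) = f v + 0"
    using assms(4) by simp
  then have "sum f (D - {v}) = 0"
    by (simp only: add_left_cancel)
  then show False
    using \<open>0 < sum f (D - {v})\<close> by simp
qed

lemma program_rule_in_T: "R \<in> P \<Longrightarrow> (R, Hard) \<in> T C Cp Dom p P"
  unfolding T_def by blast

lemma T_head_nonempty:
  assumes "(R, w) \<in> T C Cp Dom p P" and "head R \<noteq> {}"
  shows "R \<in> P \<or> (\<exists>a. fst a \<in> Cp \<and> R = fact a)"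
  using assms unfolding T_def by auto

lemma TC_fact_in_T:
  assumes prog: "mv_prob_program C Cp Dom p P" and pos: "\<forall>c\<in>Cp. \<forall>v\<in>Dom c. p c v > 0"
    and sig: "I \<subseteq> sig_atoms C Dom" and "a \<in> TC Cp I"
  shows "\<exists>w. (fact a, w) \<in> T C Cp Dom p P"
proof -
  obtain c v where a: "a = (c, v)" "c \<in> Cp" "v \<in> Dom c"
    using \<open>a \<in> TC Cp I\<close> sig unfolding TC_def sig_atoms_def by auto
  have "0 < p c v"
    using pos a by blast
  have "p c v \<le> 1"
    using prog a unfolding mv_prob_program_def by blast
  show ?thesis
  proof (cases "p c v = 1")
    case True
    then have "(fact a, Hard) \<in> T C Cp Dom p P"
      unfolding T_def using a by blast
    then show ?thesis ..
  next
    case False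
    with \<open>p c v \<le> 1\<close> have "p c v < 1"
      by linarith
    with a \<open>0 < p c v\<close> have "(fact a, Soft (ln (p c v))) \<in> T C Cp Dom p P"
      unfolding T_def by blast
    then show ?thesis ..
  qed
qed

lemma T_hard_cases:
  assumes "(R, Hard) \<in> T C Cp Dom p P"
  obtains (certain) c v where "c \<in> Cp" "v \<in> Dom c" "p c v = 1" "R = fact (c, v)"
  | (impossible) c v where "c \<in> Cp" "v \<in> Dom c" "p c v = 0" "R = Rule {} {(c, v)} FTop"
  | (program) "R \<in> P"
  | (unique) c v1 v2 where "c \<in> C" "v1 \<in> Dom c" "v2 \<in> Dom c" "v1 \<noteq> v2"
      "R = Rule {} {(c, v1), (c, v2)} FTop"
  | (exists) c where "c \<in> Cp"
      "R = Rule {} {} (FNeg (FOr (map (\<lambda>v. FAtom (c, v)) (some_enum (Dom c)))))"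
  using assms unfolding T_def by blast

lemma consistent_if_sat_hard_T:
  assumes prog: "mv_prob_program C Cp Dom p P"
    and hard: "\<forall>R. (R, Hard) \<in> T C Cp Dom p P \<longrightarrow> sat_rule I R"
  shows "consistent C Cp Dom I"
  unfolding consistent_def
proof (intro conjI ballI impI)
  fix c v1 v2 assume "c \<in> C" "v1 \<in> Dom c" "v2 \<in> Dom c" "v1 \<noteq> v2"
  then have "(Rule {} {(c, v1), (c, v2)} FTop, Hard) \<in> T C Cp Dom p P"
    unfolding T_def by blast
  then show "\<not> ((c, v1) \<in> I \<and> (c, v2) \<in> I)"
    using hard unfolding sat_rule_def by fastforce
next
  fix c assume "c \<in> Cp"
  then have "(Rule {} {} (FNeg (FOr (map (\<lambda>v. FAtom (c, v)) (some_enum (Dom c))))), Hard)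
      \<in> T C Cp Dom p P"
    unfolding T_def by blast
  moreover have "set (some_enum (Dom c)) = Dom c"
    using prog \<open>c \<in> Cp\<close> by (rule set_some_enum_Dom)
  ultimately show "\<exists>v\<in>Dom c. (c, v) \<in> I"
    using hard unfolding sat_rule_def by fastforce
qed

lemma sat_hard_T_if_consistent:
  assumes prog: "mv_prob_program C Cp Dom p P" and pos: "\<forall>c\<in>Cp. \<forall>v\<in>Dom c. p c v > 0"
    and cons: "consistent C Cp Dom I" and P_sat: "\<forall>R\<in>P. sat_rule I R"
  shows "\<forall>R. (R, Hard) \<in> T C Cp Dom p P \<longrightarrow> sat_rule I R"
proof (intro allI impI)
  fix R assume "(R, Hard) \<in> T C Cp Dom p P"
  then show "sat_rule I R"
  proof (cases rule: T_hard_cases)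
    case (certain c v)
    then have "Dom c = {v}"
      using prog pos unfolding mv_prob_program_def
      by (intro sum_pos_eq_term_imp_singleton[where f = "p c"]) auto
    then show ?thesis
      using certain cons unfolding consistent_def by auto
  next
    case (impossible c v)
    then show ?thesis using pos by (metis less_irrefl)
  next
    case program
    then show ?thesis using P_sat by blast
  next
    case (unique c v1 v2)
    then show ?thesis using cons unfolding consistent_def sat_rule_def by auto
  next
    case (exists c)
    moreover have "set (some_enum (Dom c)) = Dom c"
      using prog \<open>c \<in> Cp\<close> by (rule set_some_enum_Dom)
    ultimately show ?thesis using cons unfolding consistent_def sat_rule_def by auto
  qed
qed

lemma satisfied_T_rule_with_head:
  assumes "R \<in> satisfied_rules (T C Cp Dom p P) I" and "head R \<noteq> {}"
  shows "R \<in> P \<union> fact ` TC Cp I"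
proof -
  obtain w where "(R, w) \<in> T C Cp Dom p P" and "sat_rule I R"
    using assms(1) by (auto simp: mem_satisfied_rules_iff)
  then show ?thesis
    using T_head_nonempty assms(2) unfolding TC_def by fastforce
qed

lemma satisfied_T_contains_program_and_TC:
  assumes prog: "mv_prob_program C Cp Dom p P" and pos: "\<forall>c\<in>Cp. \<forall>v\<in>Dom c. p c v > 0"
    and sig: "I \<subseteq> sig_atoms C Dom" and P_sat: "\<forall>R\<in>P. sat_rule I R"
  shows "P \<union> fact ` TC Cp I \<subseteq> satisfied_rules (T C Cp Dom p P) I"
proof -
  have "P \<subseteq> satisfied_rules (T C Cp Dom p P) I"
    using P_sat program_rule_in_T by (blast intro: mem_satisfied_rules_iff[THEN iffD2])
  moreover have "fact a \<in> satisfied_rules (T C Cp Dom p P) I" if "a \<in> TC Cp I" for a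
  proof -
    have "a \<in> I"
      using that unfolding TC_def by blast
    then show ?thesis
      using TC_fact_in_T[OF prog pos sig that] by (simp add: mem_satisfied_rules_iff)
  qed
  ultimately show ?thesis
    by blast
qed

lemma stable_model_satisfied_T_iff:
  assumes "mv_prob_program C Cp Dom p P" and "\<forall>c\<in>Cp. \<forall>v\<in>Dom c. p c v > 0"
    and "I \<subseteq> sig_atoms C Dom" and "\<forall>R\<in>P. sat_rule I R"
  shows "stable_model (satisfied_rules (T C Cp Dom p P) I) I
     \<longleftrightarrow> stable_model (P \<union> fact ` TC Cp I) I"
proof (rule stable_model_drop_constraints)
  show "\<forall>R\<in>satisfied_rules (T C Cp Dom p P) I. sat_rule I R"
    by (simp add: mem_satisfied_rules_iff)
  show "P \<union> fact ` TC Cp I \<subseteq> satisfied_rules (T C Cp Dom p P) I"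
    using assms by (rule satisfied_T_contains_program_and_TC)
  show "\<forall>R\<in>satisfied_rules (T C Cp Dom p P) I - (P \<union> fact ` TC Cp I). head R = {}"
    using satisfied_T_rule_with_head by blast
qed

theorem lemma7:
  fixes C Cp :: "'c set" and Dom :: "'c \<Rightarrow> 'v set" and p :: "'c \<Rightarrow> 'v \<Rightarrow> real"
    and P :: "('c \<times> 'v) rule set" and I :: "('c \<times> 'v) set"
  assumes "mv_prob_program C Cp Dom p P"
    and "SM'' C Cp Dom P \<noteq> {}"
    and "\<forall>c\<in>Cp. \<forall>v\<in>Dom c. p c v > 0"
    and "I \<subseteq> sig_atoms C Dom"
  shows "I \<in> SM' (T C Cp Dom p P) \<longleftrightarrow> I \<in> SM'' C Cp Dom P"
proof -
  have hard_iff: "(\<forall>R. (R, Hard) \<in> T C Cp Dom p P \<longrightarrow> sat_rule I R)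
      \<longleftrightarrow> consistent C Cp Dom I \<and> (\<forall>R\<in>P. sat_rule I R)"
    using consistent_if_sat_hard_T[OF assms(1)] sat_hard_T_if_consistent[OF assms(1,3)]
      program_rule_in_T by blast
  have "I \<in> SM' (T C Cp Dom p P) \<longleftrightarrow> stable_model (satisfied_rules (T C Cp Dom p P) I) I
      \<and> consistent C Cp Dom I \<and> (\<forall>R\<in>P. sat_rule I R)"
    unfolding mem_SM'_iff hard_iff ..
  also have "\<dots> \<longleftrightarrow> stable_model (P \<union> fact ` TC Cp I) I
      \<and> consistent C Cp Dom I \<and> (\<forall>R\<in>P. sat_rule I R)"
    using stable_model_satisfied_T_iff[OF assms(1,3,4)] by blast
  also have "\<dots> \<longleftrightarrow> I \<in> SM'' C Cp Dom P"
    unfolding SM''_def using stable_model_sat_rule by blast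
  finally show ?thesis .
qed

end
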